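(* Fix $\eta>0$. Consider the following game between Learner, Reality and $N$ experts. At each step $t=1,2,\dots$: each Expert $n$ ($n=1,\dots,N$) announces a prediction $\gamma_t^n\in[0,1]$ and a loss function $\lambda_t^n\in\mathcal{L}$ that is required to be $\eta$-mixable; then Learner announces $\pi_t\in[0,1]$; then Reality announces $\omega_t\in\{0,1\}$. Learner has a strategy that guarantees, for all $T\ge1$ and all $n=1,\dots,N$, $$\sum_{t=1}^T\lambda_t^n(\pi_t,\omega_t)\le\sum_{t=1}^T\lambda_t^n(\gamma_t^n,\omega_t)+\frac{\ln N}{\eta}.$$
   Context: A loss function is a map $\lambda:[0,1]\times\{0,1\}\to[0,\infty]$ satisfying: (1) $\lambda(\gamma,0)$ and $\lambda(\gamma,1)$ are continuous in $\gamma\in[0,1]$ (with the standard topology on $[0,\infty]$); (2) there exists $\gamma$ with $\lambda(\gamma,0),\lambda(\gamma,1)$ both finite; (3) there is no $\gamma$ with both infinite. The superprediction set is $\Sigma_\lambda=\{(x,y)\in[0,\infty)^2:\exists\gamma\ \lambda(\gamma,0)\le x,\ \lambda(\gamma,1)\le y\}$. For $\eta>0$, $\lambda$ is $\eta$-mixable if $\{(e^{-\eta x},e^{-\eta y}):(x,y)\in\Sigma_\lambda\}$ is convex; mixable if $\eta$-mixable for some $\eta>0$. $\lambda$ is proper if $\pi\lambda(\pi,1)+(1-\pi)\lambda(\pi,0)\le\pi\lambda(\pi',1)+(1-\pi)\lambda(\pi',0)$ for all $\pi,\pi'\in[0,1]$. $\mathcal{L}$ is the set of loss functions that are both mixable and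 proper. *)

theory Defs
  imports "HOL-Analysis.Analysis"
begin

text \<open>A loss is a map [0,1] x {0,1} -> [0,infinity]; we use type ennreal for [0,infinity]
  and encode outcomes omega as naturals restricted to {0,1}.\<close>

type_synonym loss = "real \<Rightarrow> nat \<Rightarrow> ennreal"

definition is_loss :: "loss \<Rightarrow> bool" where
  "is_loss l \<longleftrightarrow>
     continuous_on {0..1} (\<lambda>g. l g 0) \<and> continuous_on {0..1} (\<lambda>g. l g 1) \<and>
     (\<exists>g\<in>{0..1}. l g 0 < \<infinity> \<and> l g 1 < \<infinity>) \<and>
     \<not> (\<exists>g\<in>{0..1}. l g 0 = \<infinity> \<and> l g 1 = \<infinity>)"

definition superpred :: "loss \<Rightarrow> (real \<times> real) set" where
  "superpred l = {(x, y). 0 \<le> x \<and> 0 \<le> y \<and>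
      (\<exists>g\<in>{0..1}. l g 0 \<le> ennreal x \<and> l g 1 \<le> ennreal y)}"

definition eta_mixable :: "real \<Rightarrow> loss \<Rightarrow> bool" where
  "eta_mixable \<eta> l \<longleftrightarrow> convex ((\<lambda>(x, y). (exp (- \<eta> * x), exp (- \<eta> * y))) ` superpred l)"

definition mixable :: "loss \<Rightarrow> bool" where
  "mixable l \<longleftrightarrow> (\<exists>\<eta>>0. eta_mixable \<eta> l)"

definition proper :: "loss \<Rightarrow> bool" where
  "proper l \<longleftrightarrow> (\<forall>p\<in>{0..1}. \<forall>p'\<in>{0..1}.
     ennreal p * l p 1 + ennreal (1 - p) * l p 0 \<le> ennreal p * l p' 1 + ennreal (1 - p) * l p' 0)"

definition Lset :: "loss set" where
  "Lset = {l. is_loss l \<and> mixable l \<and> proper l}"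

text \<open>A Learner strategy maps the time t, the experts' predictions G s n, the experts' losses
  Ls s n and the outcomes w s to Learner's prediction at time t; it must be non-anticipating:
  it may depend only on experts' moves at times s \<le> t and outcomes at times s < t.\<close>

definition nonanticipating ::
  "(nat \<Rightarrow> (nat \<Rightarrow> nat \<Rightarrow> real) \<Rightarrow> (nat \<Rightarrow> nat \<Rightarrow> loss) \<Rightarrow> (nat \<Rightarrow> nat) \<Rightarrow> real) \<Rightarrow> bool" where
  "nonanticipating S \<longleftrightarrow> (\<forall>t G G' Ls Ls' w w'.
      (\<forall>s\<le>t. G s = G' s \<and> Ls s = Ls' s) \<and> (\<forall>s<t. w s = w' s) \<longrightarrow>
      S t G Ls w = S t G' Ls' w')"

end

theory Submission
  imports Defs
begin

text \<open>Learner follows the Aggregating Algorithm: expert n carries the weight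
  u_n = \<Prod>_t exp (\<eta> (\<lambda>_t^n(\<pi>_t, \<omega>_t) - \<lambda>_t^n(\<gamma>_t^n, \<omega>_t))), initially 1.
  For a proper \<eta>-mixable loss, moving the point \<lambda>(p, \<cdot>) towards \<lambda>(g, \<cdot>) along the
  mixability curve cannot lower its expected loss when \<omega> = 1 has probability p; differentiating at
  the start of the curve gives E_p exp (\<eta> (\<lambda>(p, \<omega>) - \<lambda>(g, \<omega>))) \<le> 1. Hence the updated total
  weights U_0(p), U_1(p) satisfy p U_1(p) + (1 - p) U_0(p) \<le> U, the current total, and as both
  are continuous on the connected interval [0, 1], some \<pi> has U_0(\<pi>) \<le> U and U_1(\<pi>) \<le> U.
  Predicting such a \<pi> keeps the total weight at most N, so each single weight is at most N, and
  taking logarithms yields the regret bound ln N / \<eta>.\<close>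

definition ennexp :: "real \<Rightarrow> ennreal \<Rightarrow> ennreal" where
  "ennexp \<eta> x = (if x = top then top else ennreal (exp (\<eta> * enn2real x)))"

lemma ennexp_top [simp]: "ennexp \<eta> top = top"
  by (simp add: ennexp_def)

lemma ennexp_ennreal: "0 \<le> r \<Longrightarrow> ennexp \<eta> (ennreal r) = ennreal (exp (\<eta> * r))"
  by (simp add: ennexp_def)

lemma ennexp_zero [simp]: "ennexp \<eta> 0 = 1"
  by (simp add: ennexp_def)

lemma ennexp_pos: "0 < ennexp \<eta> x"
  by (simp add: ennexp_def)

lemma ennexp_neq_zero [simp]: "ennexp \<eta> x \<noteq> 0"
  using ennexp_pos[of \<eta> x] by simp

lemma inverse_ennexp_less_top: "inverse (ennexp \<eta> x) < top"
  by (simp add: ennexp_def inverse_ennreal)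

lemma ennexp_add: "ennexp \<eta> (a + b) = ennexp \<eta> a * ennexp \<eta> b"
proof (cases a rule: ennreal_cases; cases b rule: ennreal_cases)
  fix r s :: real assume "0 \<le> r" "a = ennreal r" "0 \<le> s" "b = ennreal s"
  then show ?thesis
    by (simp add: ennexp_ennreal flip: ennreal_plus ennreal_mult distrib_left exp_add)
qed (simp_all add: ennreal_top_mult ennreal_mult_top)

lemma ennexp_sum: "ennexp \<eta> (\<Sum>t\<in>F. a t) = (\<Prod>t\<in>F. ennexp \<eta> (a t))"
  by (induction F rule: infinite_finite_induct) (simp_all add: ennexp_add)

lemma ennexp_le_iff:
  assumes "\<eta> > 0" shows "ennexp \<eta> a \<le> ennexp \<eta> b \<longleftrightarrow> a \<le> b"
proof (cases a rule: ennreal_cases; cases b rule: ennreal_cases)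
  fix r s :: real assume "0 \<le> r" "a = ennreal r" "0 \<le> s" "b = ennreal s"
  then show ?thesis using assms by (simp add: ennexp_ennreal ennreal_le_iff)
qed (simp_all add: top_unique ennexp_def)

lemma mult_le_ennexp:
  assumes "\<eta> > 0" shows "ennreal \<eta> * x \<le> ennexp \<eta> x"
proof (cases x)
  case (real r)
  have "\<eta> * r \<le> exp (\<eta> * r)" using exp_ge_add_one_self[of "\<eta> * r"] by linarith
  moreover have "ennreal \<eta> * ennreal r = ennreal (\<eta> * r)" using assms real by (simp add: ennreal_mult)
  ultimately show ?thesis using real by (simp add: ennexp_ennreal)
qed simp

lemma ennexp_times_inverse:
  assumes "a \<noteq> top" "b \<noteq> top"
  shows "ennexp \<eta> a * inverse (ennexp \<eta> b) = ennreal (exp (\<eta> * (enn2real a - enn2real b)))"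
  using assms
  by (simp add: ennexp_def inverse_ennreal ennreal_mult[symmetric] right_diff_distrib exp_diff divide_inverse)

lemma ennexp_times_inverse_le_one:
  assumes "\<eta> > 0" "a \<le> b"
  shows "ennexp \<eta> a * inverse (ennexp \<eta> b) \<le> 1"
proof (cases "b = top")
  case False
  then have "a \<noteq> top" using assms(2) by (auto simp: top_unique)
  moreover have "enn2real a \<le> enn2real b" using assms(2) False by (simp add: enn2real_mono top.not_eq_extremum)
  ultimately show ?thesis using False assms(1) by (simp add: ennexp_times_inverse mult_nonneg_nonpos)
qed simp

lemma tendsto_ennexp:
  assumes "\<eta> > 0" "(f \<longlongrightarrow> x) F"
  shows "((\<lambda>y. ennexp \<eta> (f y)) \<longlongrightarrow> ennexp \<eta> x) F"
proof (cases x)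
  case (real r)
  have ev: "\<forall>\<^sub>F y in F. f y < top" using order_tendstoD(2)[OF assms(2)] real by simp
  have "((\<lambda>y. enn2real (f y)) \<longlongrightarrow> r) F" using tendsto_enn2real[of f r F] assms(2) real by simp
  then have "((\<lambda>y. ennreal (exp (\<eta> * enn2real (f y)))) \<longlongrightarrow> ennreal (exp (\<eta> * r))) F"
    by (intro tendsto_ennrealI tendsto_exp tendsto_mult_left)
  moreover have "\<forall>\<^sub>F y in F. ennreal (exp (\<eta> * enn2real (f y))) = ennexp \<eta> (f y)"
    using ev by eventually_elim (simp add: ennexp_def)
  ultimately have "((\<lambda>y. ennexp \<eta> (f y)) \<longlongrightarrow> ennreal (exp (\<eta> * r))) F"
    by (rule Lim_transform_eventually)
  then show ?thesis using real by (simp add: ennexp_ennreal)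
next
  case top
  have lim: "((\<lambda>y. ennreal \<eta> * f y) \<longlongrightarrow> top) F"
    using ennreal_tendsto_cmult[OF _ assms(2), of \<eta>] top assms(1) by (simp add: ennreal_mult_top)
  show ?thesis unfolding top ennexp_top
  proof (rule order_tendstoI)
    fix a :: ennreal assume "a < top"
    from order_tendstoD(1)[OF lim this]
    show "\<forall>\<^sub>F y in F. a < ennexp \<eta> (f y)"
      by eventually_elim (use mult_le_ennexp[OF assms(1)] in \<open>blast intro: less_le_trans\<close>)
  qed simp
qed

lemma continuous_on_ennexp:
  "\<eta> > 0 \<Longrightarrow> continuous_on A f \<Longrightarrow> continuous_on A (\<lambda>x. ennexp \<eta> (f x))"
  unfolding continuous_on_def by (auto intro: tendsto_ennexp)

lemma ennexp_times_inverse_cancel: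
  "b \<noteq> top \<Longrightarrow> ennexp \<eta> a * inverse (ennexp \<eta> b) * ennexp \<eta> b = ennexp \<eta> a"
  by (simp add: ennexp_def inverse_ennreal mult.assoc flip: ennreal_mult)

lemma prod_ennexp_ratio_times_ennexp_sum:
  assumes "\<And>t. t \<in> F \<Longrightarrow> b t \<noteq> top"
  shows "(\<Prod>t\<in>F. ennexp \<eta> (a t) * inverse (ennexp \<eta> (b t))) * ennexp \<eta> (\<Sum>t\<in>F. b t)
    = ennexp \<eta> (\<Sum>t\<in>F. a t)"
  using assms by (simp add: ennexp_sum ennexp_times_inverse_cancel flip: prod.distrib)

lemma sum_le_sum_plus_ln_of_prod_ennexp_ratio_le:
  assumes "\<eta> > 0" "M \<ge> 1"
    and prod_le: "(\<Prod>t\<in>F. ennexp \<eta> (a t) * inverse (ennexp \<eta> (b t))) \<le> ennreal M"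
  shows "(\<Sum>t\<in>F. a t) \<le> (\<Sum>t\<in>F. b t) + ennreal (ln M / \<eta>)"
proof (cases "finite F \<and> (\<forall>t\<in>F. b t \<noteq> top)")
  case True
  have "ennexp \<eta> (\<Sum>t\<in>F. a t)
      = (\<Prod>t\<in>F. ennexp \<eta> (a t) * inverse (ennexp \<eta> (b t))) * ennexp \<eta> (\<Sum>t\<in>F. b t)"
    using True by (simp add: prod_ennexp_ratio_times_ennexp_sum)
  also have "\<dots> \<le> ennreal M * ennexp \<eta> (\<Sum>t\<in>F. b t)"
    using prod_le by (rule mult_right_mono) simp
  also have "ennreal M = ennexp \<eta> (ennreal (ln M / \<eta>))"
    using assms(1,2) by (simp add: ennexp_ennreal)
  also have "\<dots> * ennexp \<eta> (\<Sum>t\<in>F. b t) = ennexp \<eta> ((\<Sum>t\<in>F. b t) + ennreal (ln M / \<eta>))"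
    by (simp add: ennexp_add mult.commute)
  finally show ?thesis using assms(1) by (simp add: ennexp_le_iff)
next
  case False
  then have "infinite F \<or> (\<Sum>t\<in>F. b t) = top" by auto
  then show ?thesis by (elim disjE) simp_all
qed

lemma proper_loss_finite:
  assumes "is_loss l" "proper l" "0 < p" "p < 1"
  shows "l p 0 < top" "l p 1 < top"
proof -
  obtain g where g: "g \<in> {0..1}" "l g 0 < top" "l g 1 < top"
    using assms(1) by (auto simp: is_loss_def)
  have "ennreal p * l p 1 + ennreal (1 - p) * l p 0 \<le> ennreal p * l g 1 + ennreal (1 - p) * l g 0"
    using assms(2-4) g(1) by (auto simp: proper_def)
  also have "\<dots> < top" using g by (simp add: ennreal_mult_less_top)
  finally show "l p 0 < top" "l p 1 < top"
    using assms(3,4) by (auto simp: ennreal_mult_less_top)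
qed

lemma proper_loss_min_at_0: "proper l \<Longrightarrow> g \<in> {0..1} \<Longrightarrow> l 0 0 \<le> l g 0"
  unfolding proper_def by (drule bspec[of _ _ 0]) auto

lemma proper_loss_min_at_1: "proper l \<Longrightarrow> g \<in> {0..1} \<Longrightarrow> l 1 1 \<le> l g 1"
  unfolding proper_def by (drule bspec[of _ _ 1]) auto

lemma superpred_memI:
  "0 \<le> x \<Longrightarrow> 0 \<le> y \<Longrightarrow> g \<in> {0..1} \<Longrightarrow> l g 0 \<le> ennreal x \<Longrightarrow> l g 1 \<le> ennreal y \<Longrightarrow> (x, y) \<in> superpred l"
  by (auto simp: superpred_def)

lemma proper_le_superpred:
  assumes "proper l" "p \<in> {0..1}" "l p 0 = ennreal x" "l p 1 = ennreal y" "0 \<le> x" "0 \<le> y"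
    and "(x', y') \<in> superpred l"
  shows "p * y + (1 - p) * x \<le> p * y' + (1 - p) * x'"
proof -
  obtain g where g: "g \<in> {0..1}" "l g 0 \<le> ennreal x'" "l g 1 \<le> ennreal y'" "0 \<le> x'" "0 \<le> y'"
    using assms(7) by (auto simp: superpred_def)
  have "ennreal p * l p 1 + ennreal (1 - p) * l p 0 \<le> ennreal p * l g 1 + ennreal (1 - p) * l g 0"
    using assms(1,2) g(1) by (auto simp: proper_def)
  also have "\<dots> \<le> ennreal p * ennreal y' + ennreal (1 - p) * ennreal x'"
    using g by (intro add_mono mult_left_mono) auto
  finally show ?thesis
    using assms(2-6) g(4,5) by (simp add: ennreal_le_iff flip: ennreal_mult ennreal_plus)
qed

lemma eta_mixable_mix:
  assumes "eta_mixable \<eta> l" "(x, y) \<in> superpred l" "(x', y') \<in> superpred l" "s \<in> {0..1}"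
  obtains x'' y'' where "(x'', y'') \<in> superpred l"
    "exp (- \<eta> * x'') = (1 - s) * exp (- \<eta> * x) + s * exp (- \<eta> * x')"
    "exp (- \<eta> * y'') = (1 - s) * exp (- \<eta> * y) + s * exp (- \<eta> * y')"
proof -
  let ?E = "\<lambda>(x, y). (exp (- \<eta> * x), exp (- \<eta> * y))"
  have "(1 - s) *\<^sub>R ?E (x, y) + s *\<^sub>R ?E (x', y') \<in> ?E ` superpred l"
    using assms by (intro convexD) (auto simp: eta_mixable_def)
  then show ?thesis by (auto simp: prod_eq_iff intro: that)
qed

lemma mixture_le_one_of_ln_mixture_nonpos:
  fixes p A B :: real
  assumes nonpos: "\<And>s. 0 < s \<Longrightarrow> s < 1 \<Longrightarrow> p * ln (1 - s + s * A) + (1 - p) * ln (1 - s + s * B) \<le> 0"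
  shows "p * A + (1 - p) * B \<le> 1"
proof (rule ccontr)
  define f where "f s = p * ln (1 - s + s * A) + (1 - p) * ln (1 - s + s * B)" for s
  assume "\<not> ?thesis"
  then have "0 < p * (A - 1) + (1 - p) * (B - 1)" by (simp add: algebra_simps)
  moreover have "(f has_real_derivative p * (A - 1) + (1 - p) * (B - 1)) (at 0)"
    unfolding f_def by (rule derivative_eq_intros refl | simp)+
  ultimately obtain d where "d > 0" "\<forall>h>0. h < d \<longrightarrow> f 0 < f (0 + h)"
    using DERIV_pos_inc_right by blast
  then have "f 0 < f (min (d / 2) (1 / 2))" by simp
  moreover have "f (min (d / 2) (1 / 2)) \<le> 0" unfolding f_def using \<open>d > 0\<close> by (intro nonpos) auto
  ultimately show False by (simp add: f_def)
qed

lemma mixable_proper_exp_bound: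
  assumes "\<eta> > 0" "proper l" "eta_mixable \<eta> l" "p \<in> {0..1}" "g \<in> {0..1}"
    and lp: "l p 0 = ennreal x" "l p 1 = ennreal y" and lg: "l g 0 = ennreal x'" "l g 1 = ennreal y'"
    and nonneg: "0 \<le> x" "0 \<le> y" "0 \<le> x'" "0 \<le> y'"
  shows "p * exp (\<eta> * (y - y')) + (1 - p) * exp (\<eta> * (x - x')) \<le> 1"
proof (rule mixture_le_one_of_ln_mixture_nonpos)
  fix s :: real assume s: "0 < s" "s < 1"
  have ln_shift: "a = b + ln c" if "exp a = exp b * c" for a b c :: real
  proof -
    have "c > 0" using that by (metis exp_gt_zero zero_less_mult_pos)
    then show ?thesis using arg_cong[OF that, of ln] by (simp add: ln_mult)
  qed
  have mix_eq: "(1 - s) * exp (- \<eta> * u) + s * exp (- \<eta> * u') = exp (- \<eta> * u) * (1 - s + s * exp (\<eta> * (u - u')))"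
    for u u' :: real
    by (simp add: algebra_simps flip: exp_add)
  define cx where "cx = 1 - s + s * exp (\<eta> * (x - x'))"
  define cy where "cy = 1 - s + s * exp (\<eta> * (y - y'))"
  have "(x, y) \<in> superpred l" "(x', y') \<in> superpred l"
    using assms(4,5) lp lg nonneg by (auto intro: superpred_memI)
  then obtain x'' y'' where mixed: "(x'', y'') \<in> superpred l"
    "exp (- \<eta> * x'') = exp (- \<eta> * x) * cx" "exp (- \<eta> * y'') = exp (- \<eta> * y) * cy"
    using eta_mixable_mix[OF assms(3), of x y x' y' s] s unfolding mix_eq cx_def cy_def by auto
  have "\<eta> * (p * y + (1 - p) * x) \<le> \<eta> * (p * y'' + (1 - p) * x'')"
    using proper_le_superpred[OF assms(2,4) lp nonneg(1,2) mixed(1)] assms(1) by simp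
  also have "\<dots> = p * (\<eta> * y'') + (1 - p) * (\<eta> * x'')"
    by (simp add: algebra_simps)
  also have "\<dots> = p * (\<eta> * y - ln cy) + (1 - p) * (\<eta> * x - ln cx)"
  proof -
    have "\<eta> * x'' = \<eta> * x - ln cx" "\<eta> * y'' = \<eta> * y - ln cy"
      using ln_shift[OF mixed(2)] ln_shift[OF mixed(3)] by simp_all
    then show ?thesis by simp
  qed
  finally have "p * ln cy + (1 - p) * ln cx \<le> 0"
    by (simp add: algebra_simps)
  then show "p * ln (1 - s + s * exp (\<eta> * (y - y'))) + (1 - p) * ln (1 - s + s * exp (\<eta> * (x - x'))) \<le> 0"
    by (simp add: cx_def cy_def)
qed

lemma closed_Collect_le_on:
  fixes f g :: "'a::topological_space \<Rightarrow> 'b::linorder_topology"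
  assumes "closed S" "continuous_on S f" "continuous_on S g"
  shows "closed {x \<in> S. f x \<le> g x}"
proof -
  have "closed {z :: 'b \<times> 'b. fst z \<le> snd z}"
    by (intro closed_Collect_le continuous_intros)
  then have "closed ((\<lambda>x. (f x, g x)) -` {z. fst z \<le> snd z} \<inter> S)"
    using assms continuous_on_closed_vimage continuous_on_Pair by blast
  also have "(\<lambda>x. (f x, g x)) -` {z. fst z \<le> snd z} \<inter> S = {x \<in> S. f x \<le> g x}"
    by auto
  finally show ?thesis .
qed

lemma le_on_Icc_of_le_on_interior:
  fixes f :: "real \<Rightarrow> 'b::linorder_topology"
  assumes "a < b" "continuous_on {a..b} f" "\<And>x. a < x \<Longrightarrow> x < b \<Longrightarrow> f x \<le> c" "x \<in> {a..b}"
  shows "f x \<le> c"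
proof -
  have "closed {x \<in> {a..b}. f x \<le> c}"
    using assms(2) by (intro closed_Collect_le_on continuous_on_const) auto
  moreover have "{a<..<b} \<subseteq> {x \<in> {a..b}. f x \<le> c}"
    using assms(3) by auto
  ultimately have "closure {a<..<b} \<subseteq> {x \<in> {a..b}. f x \<le> c}"
    by (rule closure_minimal[rotated])
  then show ?thesis using assms(1,4) by auto
qed

definition exp_regret :: "real \<Rightarrow> loss \<Rightarrow> real \<Rightarrow> real \<Rightarrow> ennreal" where
  "exp_regret \<eta> l p g =
     ennreal p * ennexp \<eta> (l p 1) * inverse (ennexp \<eta> (l g 1))
   + ennreal (1 - p) * ennexp \<eta> (l p 0) * inverse (ennexp \<eta> (l g 0))"

lemma exp_regret_le_one_if_finite:
  assumes "\<eta> > 0" "proper l" "eta_mixable \<eta> l" "p \<in> {0..1}" "g \<in> {0..1}"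
    and finite: "l p 0 \<noteq> top" "l p 1 \<noteq> top" "l g 0 \<noteq> top" "l g 1 \<noteq> top"
  shows "exp_regret \<eta> l p g \<le> 1"
proof -
  let ?r = "\<lambda>q w. enn2real (l q w)"
  have "exp_regret \<eta> l p g
      = ennreal (p * exp (\<eta> * (?r p 1 - ?r g 1)) + (1 - p) * exp (\<eta> * (?r p 0 - ?r g 0)))"
    using assms(4) finite
    by (simp add: exp_regret_def mult.assoc ennexp_times_inverse ennreal_plus flip: ennreal_mult)
  also have "\<dots> \<le> ennreal 1"
    using assms(4) finite
    by (intro ennreal_leI mixable_proper_exp_bound[OF assms(1-5)])
       (simp_all add: ennreal_enn2real_if)
  finally show ?thesis by simp
qed

lemma exp_regret_le_one:
  assumes "\<eta> > 0" "l \<in> Lset" "eta_mixable \<eta> l" "p \<in> {0..1}" "g \<in> {0..1}"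
  shows "exp_regret \<eta> l p g \<le> 1"
proof -
  have loss: "is_loss l" and proper: "proper l" using assms(2) by (auto simp: Lset_def)
  consider "p = 0" | "p = 1" | "0 < p" "p < 1" using assms(4) by fastforce
  then show ?thesis
  proof cases
    case 1
    then show ?thesis using proper_loss_min_at_0[OF proper assms(5)] assms(1)
      by (simp add: exp_regret_def ennexp_times_inverse_le_one)
  next
    case 2
    then show ?thesis using proper_loss_min_at_1[OF proper assms(5)] assms(1)
      by (simp add: exp_regret_def ennexp_times_inverse_le_one)
  next
    case 3
    note finite_p = proper_loss_finite[OF loss proper 3]
    \<comment> \<open>at an endpoint \<open>g\<close> one of the losses may be infinite; pass to the limit from the interior\<close>
    have "continuous_on {0..1} (exp_regret \<eta> l p)"
      using loss finite_p unfolding exp_regret_def is_loss_def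
      by (intro continuous_on_add_ennreal ennreal_continuous_on_cmult continuous_on_inverse_ennreal
          continuous_on_ennexp[OF assms(1)]) (simp_all add: ennreal_mult_less_top ennexp_def)
    then show ?thesis
    proof (rule le_on_Icc_of_le_on_interior[OF zero_less_one _ _ assms(5)])
      fix g :: real assume "0 < g" "g < 1"
      then show "exp_regret \<eta> l p g \<le> 1"
        using proper_loss_finite[OF loss proper, of g] finite_p 3 assms(1,3)
        by (intro exp_regret_le_one_if_finite[OF _ proper]) auto
    qed
  qed
qed

lemma exists_both_le_of_mixture_le:
  fixes A0 A1 :: "real \<Rightarrow> ennreal"
  assumes cont: "continuous_on {0..1} A0" "continuous_on {0..1} A1"
    and mix: "\<And>p. p \<in> {0..1} \<Longrightarrow> ennreal p * A1 p + ennreal (1 - p) * A0 p \<le> U"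
  shows "\<exists>p\<in>{0..1}. A0 p \<le> U \<and> A1 p \<le> U"
proof -
  define S0 where "S0 = {p \<in> {0..1}. A0 p \<le> A1 p}"
  define S1 where "S1 = {p \<in> {0..1}. A1 p \<le> A0 p}"
  have "closed S0" "closed S1"
    unfolding S0_def S1_def by (intro closed_Collect_le_on closed_atLeastAtMost cont)+
  moreover have "{0..1} \<subseteq> S0 \<union> S1" by (auto simp: S0_def S1_def)
  moreover have "S0 \<inter> {0..1} = S0" "S1 \<inter> {0..1} = S1" by (auto simp: S0_def S1_def)
  ultimately have "S0 \<inter> S1 \<noteq> {} \<or> S0 = {} \<or> S1 = {}"
    using connected_closedD[of "{0..1::real}" S0 S1] by auto
  then consider p where "p \<in> S0 \<inter> S1" | "S0 = {}" | "S1 = {}" by blast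
  then show ?thesis
  proof cases
    case 1
    then have p: "p \<in> {0..1}" "A0 p = A1 p" by (auto simp: S0_def S1_def)
    have "A1 p = ennreal p * A1 p + ennreal (1 - p) * A0 p"
      using p by (simp add: flip: distrib_right ennreal_plus)
    then show ?thesis using mix[OF p(1)] p by (intro bexI[OF _ p(1)]) auto
  next
    case 2
    then have "\<not> A0 0 \<le> A1 0" by (auto simp: S0_def)
    moreover have "A0 0 \<le> U" using mix[of 0] by simp
    ultimately show ?thesis by (intro bexI[of _ 0]) auto
  next
    case 3
    then have "\<not> A1 1 \<le> A0 1" by (auto simp: S1_def)
    moreover have "A1 1 \<le> U" using mix[of 1] by simp
    ultimately show ?thesis by (intro bexI[of _ 1]) auto
  qed
qed

definition updated_total_weight ::
  "real \<Rightarrow> 'i set \<Rightarrow> ('i \<Rightarrow> ennreal) \<Rightarrow> ('i \<Rightarrow> real) \<Rightarrow> ('i \<Rightarrow> loss) \<Rightarrow> nat \<Rightarrow> real \<Rightarrow> ennreal" where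
  "updated_total_weight \<eta> I u gam l w p =
     (\<Sum>n\<in>I. u n * ennexp \<eta> (l n p w) * inverse (ennexp \<eta> (l n (gam n) w)))"

lemma updated_total_weight_mixture_le:
  assumes "\<eta> > 0" "\<And>n. n \<in> I \<Longrightarrow> gam n \<in> {0..1} \<and> l n \<in> Lset \<and> eta_mixable \<eta> (l n)"
    and "p \<in> {0..1}"
  shows "ennreal p * updated_total_weight \<eta> I u gam l 1 p + ennreal (1 - p) * updated_total_weight \<eta> I u gam l 0 p
    \<le> (\<Sum>n\<in>I. u n)"
proof -
  have "ennreal p * updated_total_weight \<eta> I u gam l 1 p + ennreal (1 - p) * updated_total_weight \<eta> I u gam l 0 p
      = (\<Sum>n\<in>I. u n * exp_regret \<eta> (l n) p (gam n))"
    unfolding updated_total_weight_def exp_regret_def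
    by (simp add: sum_distrib_left distrib_left mult.assoc mult.left_commute flip: sum.distrib)
  also have "\<dots> \<le> (\<Sum>n\<in>I. u n * 1)"
    using assms by (intro sum_mono mult_left_mono exp_regret_le_one) auto
  finally show ?thesis by simp
qed

lemma continuous_on_updated_total_weight:
  assumes "\<eta> > 0" "\<And>n. n \<in> I \<Longrightarrow> is_loss (l n) \<and> u n < top" "w \<in> {0, 1}"
  shows "continuous_on {0..1} (updated_total_weight \<eta> I u gam l w)"
proof -
  have eq: "updated_total_weight \<eta> I u gam l w
      = (\<lambda>p. \<Sum>n\<in>I. (u n * inverse (ennexp \<eta> (l n (gam n) w))) * ennexp \<eta> (l n p w))"
    unfolding updated_total_weight_def by (simp add: mult.commute mult.left_commute)
  show ?thesis
    unfolding eq using assms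
    by (intro continuous_on_sum ennreal_continuous_on_cmult continuous_on_ennexp)
       (auto simp: is_loss_def ennreal_mult_less_top inverse_ennexp_less_top)
qed

definition no_weight_gain ::
  "real \<Rightarrow> 'i set \<Rightarrow> ('i \<Rightarrow> ennreal) \<Rightarrow> ('i \<Rightarrow> real) \<Rightarrow> ('i \<Rightarrow> loss) \<Rightarrow> real \<Rightarrow> bool" where
  "no_weight_gain \<eta> I u gam l p \<longleftrightarrow>
     p \<in> {0..1} \<and> (\<forall>w\<in>{0, 1}. updated_total_weight \<eta> I u gam l w p \<le> (\<Sum>n\<in>I. u n))"

lemma ex_no_weight_gain:
  assumes "\<eta> > 0" "\<And>n. n \<in> I \<Longrightarrow> gam n \<in> {0..1} \<and> l n \<in> Lset \<and> eta_mixable \<eta> (l n)"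
    and "\<And>n. n \<in> I \<Longrightarrow> u n < top"
  shows "\<exists>p. no_weight_gain \<eta> I u gam l p"
proof -
  have cont: "continuous_on {0..1} (updated_total_weight \<eta> I u gam l w)" if "w \<in> {0, 1}" for w
    using assms that by (intro continuous_on_updated_total_weight) (auto simp: Lset_def)
  have "\<exists>p\<in>{0..1}. updated_total_weight \<eta> I u gam l 0 p \<le> (\<Sum>n\<in>I. u n)
      \<and> updated_total_weight \<eta> I u gam l 1 p \<le> (\<Sum>n\<in>I. u n)"
    by (rule exists_both_le_of_mixture_le[OF cont cont updated_total_weight_mixture_le[OF assms(1,2)]]) simp_all
  then show ?thesis by (auto simp: no_weight_gain_def)
qed

definition aa_prediction :: "real \<Rightarrow> 'i set \<Rightarrow> ('i \<Rightarrow> ennreal) \<Rightarrow> ('i \<Rightarrow> real) \<Rightarrow> ('i \<Rightarrow> loss) \<Rightarrow> real" where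
  "aa_prediction \<eta> I u gam l =
     (if \<exists>p. no_weight_gain \<eta> I u gam l p then SOME p. no_weight_gain \<eta> I u gam l p else 0)"

lemma no_weight_gain_aa_prediction:
  "no_weight_gain \<eta> I u gam l p \<Longrightarrow> no_weight_gain \<eta> I u gam l (aa_prediction \<eta> I u gam l)"
  unfolding aa_prediction_def by (auto intro: someI)

lemma aa_prediction_in_unit: "aa_prediction \<eta> I u gam l \<in> {0..1}"
proof (cases "\<exists>p. no_weight_gain \<eta> I u gam l p")
  case True
  then obtain p where "no_weight_gain \<eta> I u gam l p" ..
  then show ?thesis by (metis no_weight_gain_aa_prediction no_weight_gain_def)
qed (simp add: aa_prediction_def)

text \<open>Rounds are numbered from 1, so the weights before rounds 0 and 1 are both the initial
  weights 1; the weight before round \<open>t + 1\<close> multiplies in the ratio of round \<open>t\<close>.\<close>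

primrec aa_weight ::
  "real \<Rightarrow> nat \<Rightarrow> nat \<Rightarrow> (nat \<Rightarrow> nat \<Rightarrow> real) \<Rightarrow> (nat \<Rightarrow> nat \<Rightarrow> loss) \<Rightarrow> (nat \<Rightarrow> nat) \<Rightarrow> nat \<Rightarrow> ennreal" where
  "aa_weight \<eta> N 0 G Ls w = (\<lambda>n. 1)"
| "aa_weight \<eta> N (Suc t) G Ls w = (\<lambda>n. if t = 0 then 1 else
      aa_weight \<eta> N t G Ls w n
      * ennexp \<eta> (Ls t n (aa_prediction \<eta> {1..N} (aa_weight \<eta> N t G Ls w) (G t) (Ls t)) (w t))
      * inverse (ennexp \<eta> (Ls t n (G t n) (w t))))"

definition aa_strategy ::
  "real \<Rightarrow> nat \<Rightarrow> nat \<Rightarrow> (nat \<Rightarrow> nat \<Rightarrow> real) \<Rightarrow> (nat \<Rightarrow> nat \<Rightarrow> loss) \<Rightarrow> (nat \<Rightarrow> nat) \<Rightarrow> real" where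
  "aa_strategy \<eta> N t G Ls w = aa_prediction \<eta> {1..N} (aa_weight \<eta> N t G Ls w) (G t) (Ls t)"

lemma aa_strategy_in_unit: "aa_strategy \<eta> N t G Ls w \<in> {0..1}"
  unfolding aa_strategy_def by (rule aa_prediction_in_unit)

lemma aa_weight_eq_if_history_eq:
  "(\<And>s. s < t \<Longrightarrow> G s = G' s \<and> Ls s = Ls' s \<and> w s = w' s) \<Longrightarrow> aa_weight \<eta> N t G Ls w = aa_weight \<eta> N t G' Ls' w'"
proof (induction t)
  case (Suc t)
  have "aa_weight \<eta> N t G Ls w = aa_weight \<eta> N t G' Ls' w'" using Suc.prems by (intro Suc.IH) auto
  moreover have "G t = G' t" "Ls t = Ls' t" "w t = w' t" using Suc.prems by auto
  ultimately show ?case by (simp only: aa_weight.simps)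
qed simp

lemma nonanticipating_aa_strategy: "nonanticipating (aa_strategy \<eta> N)"
  unfolding nonanticipating_def
proof (intro allI impI)
  fix t :: nat and G G' :: "nat \<Rightarrow> nat \<Rightarrow> real" and Ls Ls' :: "nat \<Rightarrow> nat \<Rightarrow> loss" and w w' :: "nat \<Rightarrow> nat"
  assume history: "(\<forall>s\<le>t. G s = G' s \<and> Ls s = Ls' s) \<and> (\<forall>s<t. w s = w' s)"
  then have "aa_weight \<eta> N t G Ls w = aa_weight \<eta> N t G' Ls' w'"
    by (intro aa_weight_eq_if_history_eq) auto
  moreover have "G t = G' t" "Ls t = Ls' t" using history by auto
  ultimately show "aa_strategy \<eta> N t G Ls w = aa_strategy \<eta> N t G' Ls' w'"
    by (simp add: aa_strategy_def)
qed

lemma sum_aa_weight_Suc: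
  "t \<noteq> 0 \<Longrightarrow> (\<Sum>n\<in>{1..N}. aa_weight \<eta> N (Suc t) G Ls w n)
     = updated_total_weight \<eta> {1..N} (aa_weight \<eta> N t G Ls w) (G t) (Ls t) (w t) (aa_strategy \<eta> N t G Ls w)"
  by (simp add: updated_total_weight_def aa_strategy_def)

lemma aa_weight_Suc:
  "aa_weight \<eta> N (Suc t) G Ls w n = (if t = 0 then 1 else aa_weight \<eta> N t G Ls w n *
     (ennexp \<eta> (Ls t n (aa_strategy \<eta> N t G Ls w) (w t)) * inverse (ennexp \<eta> (Ls t n (G t n) (w t)))))"
  by (simp add: aa_strategy_def mult.assoc)

lemma aa_weight_Suc_eq_prod:
  "aa_weight \<eta> N (Suc T) G Ls w n =
     (\<Prod>t\<in>{1..T}. ennexp \<eta> (Ls t n (aa_strategy \<eta> N t G Ls w) (w t)) * inverse (ennexp \<eta> (Ls t n (G t n) (w t))))"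
  by (induction T) (simp_all add: aa_weight_Suc prod.nat_ivl_Suc' mult.commute del: aa_weight.simps)

lemma sum_aa_weight_le:
  assumes "\<eta> > 0"
    and experts: "\<forall>t\<ge>1. \<forall>n\<in>{1..N}. G t n \<in> {0..1} \<and> Ls t n \<in> Lset \<and> eta_mixable \<eta> (Ls t n)"
    and outcomes: "\<forall>t\<ge>1. w t \<in> {0, 1}"
  shows "(\<Sum>n\<in>{1..N}. aa_weight \<eta> N t G Ls w n) \<le> of_nat N"
proof (induction t)
  case (Suc t)
  show ?case
  proof (cases "t = 0")
    case False
    let ?u = "aa_weight \<eta> N t G Ls w"
    have finite: "?u n < top" if "n \<in> {1..N}" for n
    proof -
      have "?u n \<le> (\<Sum>n\<in>{1..N}. ?u n)" using that by (intro member_le_sum) auto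
      also have "\<dots> \<le> of_nat N" by (rule Suc.IH)
      finally show ?thesis by (meson le_less_trans of_nat_less_top)
    qed
    have "G t n \<in> {0..1} \<and> Ls t n \<in> Lset \<and> eta_mixable \<eta> (Ls t n)" if "n \<in> {1..N}" for n
      using experts False that by simp
    from ex_no_weight_gain[OF assms(1) this finite]
    obtain q where "no_weight_gain \<eta> {1..N} ?u (G t) (Ls t) q" ..
    then have "no_weight_gain \<eta> {1..N} ?u (G t) (Ls t) (aa_strategy \<eta> N t G Ls w)"
      unfolding aa_strategy_def by (rule no_weight_gain_aa_prediction)
    moreover have "w t \<in> {0, 1}" using outcomes False by simp
    ultimately have "updated_total_weight \<eta> {1..N} ?u (G t) (Ls t) (w t) (aa_strategy \<eta> N t G Ls w)
        \<le> (\<Sum>n\<in>{1..N}. ?u n)"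
      unfolding no_weight_gain_def by blast
    then have "(\<Sum>n\<in>{1..N}. aa_weight \<eta> N (Suc t) G Ls w n) \<le> (\<Sum>n\<in>{1..N}. ?u n)"
      by (simp only: sum_aa_weight_Suc[OF False])
    then show ?thesis using Suc.IH by (rule order_trans)
  qed simp
qed simp

theorem corollary1:
  fixes \<eta> :: real and N :: nat
  assumes "\<eta> > 0"
  shows "\<exists>S. nonanticipating S \<and> (\<forall>t G Ls w. S t G Ls w \<in> {0..1}) \<and>
     (\<forall>G Ls w.
        (\<forall>t\<ge>1. \<forall>n\<in>{1..N}. G t n \<in> {0..1} \<and> Ls t n \<in> Lset \<and> eta_mixable \<eta> (Ls t n)) \<and>
        (\<forall>t\<ge>1. w t \<in> {0, 1}) \<longrightarrow>
        (\<forall>T\<ge>1. \<forall>n\<in>{1..N}.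
           (\<Sum>t\<in>{1..T}. Ls t n (S t G Ls w) (w t))
             \<le> (\<Sum>t\<in>{1..T}. Ls t n (G t n) (w t)) + ennreal (ln (real N) / \<eta>)))"
proof (intro exI[of _ "aa_strategy \<eta> N"] conjI allI impI ballI)
  fix G :: "nat \<Rightarrow> nat \<Rightarrow> real" and Ls :: "nat \<Rightarrow> nat \<Rightarrow> loss" and w :: "nat \<Rightarrow> nat" and T n :: nat
  assume game: "(\<forall>t\<ge>1. \<forall>n\<in>{1..N}. G t n \<in> {0..1} \<and> Ls t n \<in> Lset \<and> eta_mixable \<eta> (Ls t n)) \<and>
    (\<forall>t\<ge>1. w t \<in> {0, 1})" and "1 \<le> T" and n: "n \<in> {1..N}"
  have "aa_weight \<eta> N (Suc T) G Ls w n \<le> (\<Sum>n\<in>{1..N}. aa_weight \<eta> N (Suc T) G Ls w n)"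
    using n by (intro member_le_sum) auto
  also have "\<dots> \<le> of_nat N"
    using game by (intro sum_aa_weight_le[OF assms]) auto
  also have "\<dots> = ennreal (real N)"
    by (simp add: ennreal_of_nat_eq_real_of_nat)
  finally show "(\<Sum>t\<in>{1..T}. Ls t n (aa_strategy \<eta> N t G Ls w) (w t))
      \<le> (\<Sum>t\<in>{1..T}. Ls t n (G t n) (w t)) + ennreal (ln (real N) / \<eta>)"
    using n unfolding aa_weight_Suc_eq_prod
    by (intro sum_le_sum_plus_ln_of_prod_ennexp_ratio_le[OF assms]) auto
qed (rule nonanticipating_aa_strategy aa_strategy_in_unit)+

end
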